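(* Along a $C^1$ curve $z(s)$ with tangent $v^\mu=dz^\mu/ds$ in a Lorentzian manifold, let $p^\mu(s)$, antisymmetric $S^{\mu\nu}(s)$, a timelike unit vector $u^\mu(s)$ ($u_\mu u^\mu=-1$) and a scalar $M(s)>0$ be differentiable and satisfy $p^\mu=Mu^\mu$, $u_\mu S^{\mu\nu}=0$, and $u^\kappa v_\kappa\neq0$. Define the force and torque by $$F^\nu=\frac{\delta p^\nu}{\delta s}-\tfrac12 S^{\kappa\lambda}v^\mu R_{\kappa\lambda\mu}{}^{\nu},\qquad L^{\kappa\lambda}=\frac{\delta S^{\kappa\lambda}}{\delta s}-2p^{[\kappa}v^{\lambda]}.$$ Then $$\frac{dM}{ds}=(u^\kappa v_\kappa)^{-1}\Big[F^\mu v_\mu+u_\nu\frac{\delta u_\mu}{\delta s}L^{\mu\nu}\Big].$$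
   Context: $\delta/\delta s=v^\mu\nabla_\mu$ is the covariant derivative along the curve; $R_{\kappa\lambda\mu\nu}$ is the Riemann tensor, antisymmetric in its last two indices (and in its first two); $A^{[\kappa}B^{\lambda]}=\tfrac12(A^\kappa B^\lambda-A^\lambda B^\kappa)$. *)

theory Defs
  imports "HOL-Analysis.Analysis"
begin

text \<open>Local coordinate description of a Lorentzian metric on an open set U of R^n
  (coordinates indexed by the finite type 'n).  A metric is a matrix-valued
  field g x (components g x $ i $ j = g_ij(x)).\<close>

definition lorentzian_matrix :: "real^'n^'n \<Rightarrow> bool" where
  "lorentzian_matrix G \<longleftrightarrow> transpose G = G \<and>
     (\<exists>(P::real^'n^'n) i0. invertible P \<and>
        transpose P ** G ** P = (\<chi> i j. if i = j then (if i = i0 then -1 else 1) else 0))"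

definition pd :: "(real^'n \<Rightarrow> real) \<Rightarrow> real^'n \<Rightarrow> 'n \<Rightarrow> real" where
  "pd f x k = frechet_derivative f (at x) (axis k 1)"

definition ginv :: "(real^'n \<Rightarrow> real^'n^'n) \<Rightarrow> real^'n \<Rightarrow> real^'n^'n" where
  "ginv g x = matrix_inv (g x)"

definition Gamma :: "(real^'n \<Rightarrow> real^'n^'n) \<Rightarrow> real^'n \<Rightarrow> 'n \<Rightarrow> 'n \<Rightarrow> 'n \<Rightarrow> real" where
  "Gamma g x a b c = (1/2) * (\<Sum>d\<in>UNIV. ginv g x $ a $ d *
      (pd (\<lambda>y. g y $ d $ c) x b + pd (\<lambda>y. g y $ d $ b) x c - pd (\<lambda>y. g y $ b $ c) x d))"

text \<open>Riemann tensor R^rho_{sigma mu nu} (MTW convention), its fully lowered form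
  R_{kappa lambda mu nu} = g_{kappa rho} R^rho_{lambda mu nu}, and R_{kappa lambda mu}^nu.\<close>
definition Riem_up :: "(real^'n \<Rightarrow> real^'n^'n) \<Rightarrow> real^'n \<Rightarrow> 'n \<Rightarrow> 'n \<Rightarrow> 'n \<Rightarrow> 'n \<Rightarrow> real" where
  "Riem_up g x \<rho> \<sigma> \<mu> \<nu> =
     pd (\<lambda>y. Gamma g y \<rho> \<nu> \<sigma>) x \<mu> - pd (\<lambda>y. Gamma g y \<rho> \<mu> \<sigma>) x \<nu>
     + (\<Sum>l\<in>UNIV. Gamma g x \<rho> \<mu> l * Gamma g x l \<nu> \<sigma> - Gamma g x \<rho> \<nu> l * Gamma g x l \<mu> \<sigma>)"

definition Riem_low :: "(real^'n \<Rightarrow> real^'n^'n) \<Rightarrow> real^'n \<Rightarrow> 'n \<Rightarrow> 'n \<Rightarrow> 'n \<Rightarrow> 'n \<Rightarrow> real" where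
  "Riem_low g x \<kappa> l \<mu> \<nu> = (\<Sum>\<rho>\<in>UNIV. g x $ \<kappa> $ \<rho> * Riem_up g x \<rho> l \<mu> \<nu>)"

definition Riem_mixed :: "(real^'n \<Rightarrow> real^'n^'n) \<Rightarrow> real^'n \<Rightarrow> 'n \<Rightarrow> 'n \<Rightarrow> 'n \<Rightarrow> 'n \<Rightarrow> real" where
  "Riem_mixed g x \<kappa> l \<mu> \<nu> = (\<Sum>\<sigma>\<in>UNIV. ginv g x $ \<nu> $ \<sigma> * Riem_low g x \<kappa> l \<mu> \<sigma>)"

definition lower :: "(real^'n \<Rightarrow> real^'n^'n) \<Rightarrow> real^'n \<Rightarrow> real^'n \<Rightarrow> 'n \<Rightarrow> real" where
  "lower g x X \<mu> = (\<Sum>\<alpha>\<in>UNIV. g x $ \<mu> $ \<alpha> * X $ \<alpha>)"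

definition cov_vec :: "(real^'n \<Rightarrow> real^'n^'n) \<Rightarrow> (real \<Rightarrow> real^'n) \<Rightarrow> (real \<Rightarrow> real^'n)
    \<Rightarrow> (real \<Rightarrow> real^'n) \<Rightarrow> real \<Rightarrow> 'n \<Rightarrow> real" where
  "cov_vec g z v X s \<nu> = vector_derivative X (at s) $ \<nu>
     + (\<Sum>\<alpha>\<in>UNIV. \<Sum>\<beta>\<in>UNIV. Gamma g (z s) \<nu> \<alpha> \<beta> * v s $ \<alpha> * X s $ \<beta>)"

definition cov_covec :: "(real^'n \<Rightarrow> real^'n^'n) \<Rightarrow> (real \<Rightarrow> real^'n) \<Rightarrow> (real \<Rightarrow> real^'n)
    \<Rightarrow> (real \<Rightarrow> 'n \<Rightarrow> real) \<Rightarrow> real \<Rightarrow> 'n \<Rightarrow> real" where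
  "cov_covec g z v \<omega> s \<mu> = deriv (\<lambda>t. \<omega> t \<mu>) s
     - (\<Sum>\<alpha>\<in>UNIV. \<Sum>\<beta>\<in>UNIV. Gamma g (z s) \<alpha> \<beta> \<mu> * v s $ \<beta> * \<omega> s \<alpha>)"

definition cov_ten2 :: "(real^'n \<Rightarrow> real^'n^'n) \<Rightarrow> (real \<Rightarrow> real^'n) \<Rightarrow> (real \<Rightarrow> real^'n)
    \<Rightarrow> (real \<Rightarrow> real^'n^'n) \<Rightarrow> real \<Rightarrow> 'n \<Rightarrow> 'n \<Rightarrow> real" where
  "cov_ten2 g z v S s \<kappa> l = vector_derivative S (at s) $ \<kappa> $ l
     + (\<Sum>\<alpha>\<in>UNIV. \<Sum>\<beta>\<in>UNIV. Gamma g (z s) \<kappa> \<alpha> \<beta> * v s $ \<alpha> * S s $ \<beta> $ l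
                           + Gamma g (z s) l \<alpha> \<beta> * v s $ \<alpha> * S s $ \<kappa> $ \<beta>)"

definition force :: "(real^'n \<Rightarrow> real^'n^'n) \<Rightarrow> (real \<Rightarrow> real^'n) \<Rightarrow> (real \<Rightarrow> real^'n)
    \<Rightarrow> (real \<Rightarrow> real^'n) \<Rightarrow> (real \<Rightarrow> real^'n^'n) \<Rightarrow> real \<Rightarrow> 'n \<Rightarrow> real" where
  "force g z v p S s \<nu> = cov_vec g z v p s \<nu>
     - (1/2) * (\<Sum>\<kappa>\<in>UNIV. \<Sum>l\<in>UNIV. \<Sum>\<mu>\<in>UNIV.
                  S s $ \<kappa> $ l * v s $ \<mu> * Riem_mixed g (z s) \<kappa> l \<mu> \<nu>)"

definition torque :: "(real^'n \<Rightarrow> real^'n^'n) \<Rightarrow> (real \<Rightarrow> real^'n) \<Rightarrow> (real \<Rightarrow> real^'n)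
    \<Rightarrow> (real \<Rightarrow> real^'n) \<Rightarrow> (real \<Rightarrow> real^'n^'n) \<Rightarrow> real \<Rightarrow> 'n \<Rightarrow> 'n \<Rightarrow> real" where
  "torque g z v p S s \<kappa> l = cov_ten2 g z v S s \<kappa> l
     - 2 * ((1/2) * (p s $ \<kappa> * v s $ l - p s $ l * v s $ \<kappa>))"

end

theory Submission
  imports Defs
begin

(* Write the Levi-Civita covariant derivative along the curve in matrix form,
   DX = X' + A X with the connection matrix A^\<nu>_\<beta> = \<Gamma>^\<nu>_{\<alpha>\<beta>} v^\<alpha>.  Metric compatibility
   (g o z)' = A^T g + g A (metric_compatibility) makes lowering indices commute with D and gives Leibniz rules for
   the pairings g(X,Y) and (g X)_\<mu> S^{\<mu>\<nu>}.  Differentiating the constraints g(u,u) = -1 and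
   u_\<mu> S^{\<mu>\<nu>} = 0 yields g(u,Du) = 0 and (Du)_\<mu> S^{\<mu>\<nu>} + u_\<mu> (DS)^{\<mu>\<nu>} = 0.  The curvature part
   of the force is orthogonal to v because R_{\<kappa>\<lambda>\<mu>\<nu>} is antisymmetric in \<mu>\<nu>, and Dp = M' u + M Du.
   A final piece of linear algebra (mass_rate_identity) then shows that F.v + u_\<nu> (Du)_\<mu> L^{\<mu>\<nu>}
   equals M' (u.v): the spin part vanishes by antisymmetry of S and the orbital part of the
   torque cancels the M (Du).v contribution of the force. *)

lemma matrix_vector_mult_nth: "(A *v x) $ i = (\<Sum>j\<in>UNIV. A $ i $ j * x $ j)"
  by (simp add: matrix_vector_mult_def)

lemma vector_matrix_mult_nth: "(x v* A) $ j = (\<Sum>i\<in>UNIV. x $ i * A $ i $ j)"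
  by (simp add: vector_matrix_mult_def)

lemma matrix_matrix_mult_nth: "(A ** B) $ i $ k = (\<Sum>j\<in>UNIV. A $ i $ j * B $ j $ k)"
  by (simp add: matrix_matrix_mult_def)

lemma matrix_vector_mult_uminus_left: "(- A) *v x = - (A *v x :: real^'m)"
  by (simp add: vec_eq_iff matrix_vector_mult_nth sum_negf)

lemma matrix_mult_uminus_left: "(- A) ** B = - (A ** (B :: real^'k^'n))"
  by (simp add: vec_eq_iff matrix_matrix_mult_nth sum_negf)

lemma matrix_mult_uminus_right: "A ** (- B) = - (A ** (B :: real^'k^'n))"
  by (simp add: vec_eq_iff matrix_matrix_mult_nth sum_negf)

lemma transpose_add: "transpose (A + B) = transpose A + transpose B"
  by (simp add: transpose_def vec_eq_iff)

lemma matrix_inv_right: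
  assumes "invertible A" shows "A ** matrix_inv A = mat 1"
  using assms unfolding invertible_def matrix_inv_def by (rule someI2_ex) auto

lemma symmetric_matrix_nth:
  assumes "transpose A = A" shows "A $ i $ j = A $ j $ i"
proof -
  have "A $ i $ j = transpose A $ j $ i" by (simp add: transpose_def)
  then show ?thesis using assms by simp
qed

lemma symmetric_matrix_dot:
  fixes G :: "real^'n^'n"
  assumes "transpose G = G"
  shows "(G *v x) \<bullet> y = x \<bullet> (G *v y)"
  by (metis assms dot_lmul_matrix transpose_matrix_vector)

lemma antisymmetric_matrixI:
  assumes "\<And>i j. A $ j $ i = - A $ i $ j"
  shows "transpose A = - (A :: real^'n^'n)"
proof -
  have "transpose A $ i $ j = (- A) $ i $ j" for i j
    using assms[of i j] by (simp add: transpose_def)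
  then show ?thesis by (simp add: vec_eq_iff)
qed

lemma antisymmetric_matrix_dot:
  fixes S :: "real^'n^'n"
  assumes "transpose S = - S"
  shows "w \<bullet> (S *v w) = 0"
proof -
  have "w \<bullet> (w v* S) = w \<bullet> (S *v w)"
    by (metis dot_lmul_matrix inner_commute)
  moreover have "w \<bullet> (w v* S) = - (w \<bullet> (S *v w))"
    by (metis assms transpose_matrix_vector matrix_vector_mult_uminus_left inner_minus_right)
  ultimately show ?thesis by simp
qed

lemma lorentzian_matrix_symmetric:
  assumes "lorentzian_matrix G"
  shows "transpose G = G"
  using assms by (simp add: lorentzian_matrix_def)

lemma lorentzian_matrix_invertible:
  fixes G :: "real^'n^'n"
  assumes "lorentzian_matrix G"
  shows "invertible G"
proof -
  from assms obtain P :: "real^'n^'n" and i0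
    where diag: "transpose P ** G ** P = (\<chi> i j. if i = j then (if i = i0 then -1 else 1) else 0)"
    unfolding lorentzian_matrix_def by blast
  have "det (transpose P ** G ** P) \<noteq> 0"
    unfolding diag by (subst det_diagonal) auto
  then have "det G \<noteq> 0" by (simp add: det_mul)
  then show ?thesis by (simp add: invertible_det_nz)
qed

text \<open>A symmetric, nondegenerate, differentiable metric field on an open coordinate domain U;
  this is all the Lorentzian structure the argument uses.\<close>
definition metric_field :: "(real^'n \<Rightarrow> real^'n^'n) \<Rightarrow> (real^'n) set \<Rightarrow> bool" where
  "metric_field g U \<longleftrightarrow> open U \<and> (\<forall>y\<in>U. transpose (g y) = g y \<and> invertible (g y)
     \<and> (\<forall>i j. (\<lambda>y. g y $ i $ j) differentiable (at y)))"

lemma lorentzian_metric_field: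
  assumes "open U" "\<And>x. x \<in> U \<Longrightarrow> lorentzian_matrix (g x)"
    "\<And>x i j. x \<in> U \<Longrightarrow> (\<lambda>y. g y $ i $ j) differentiable (at x)"
  shows "metric_field g U"
  using assms by (auto simp: metric_field_def intro: lorentzian_matrix_symmetric lorentzian_matrix_invertible)

lemma metric_field_at:
  assumes "metric_field g U" "x \<in> U"
  shows "transpose (g x) = g x" "invertible (g x)" "\<And>i j. (\<lambda>y. g y $ i $ j) differentiable (at x)"
  using assms by (auto simp: metric_field_def)

definition connection_matrix :: "(real^'n \<Rightarrow> real^'n^'n) \<Rightarrow> real^'n \<Rightarrow> real^'n \<Rightarrow> real^'n^'n" where
  "connection_matrix g x w = (\<chi> \<nu> \<beta>. \<Sum>\<alpha>\<in>UNIV. Gamma g x \<nu> \<alpha> \<beta> * w $ \<alpha>)"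

definition metric_dir_deriv :: "(real^'n \<Rightarrow> real^'n^'n) \<Rightarrow> real^'n \<Rightarrow> real^'n \<Rightarrow> real^'n^'n" where
  "metric_dir_deriv g x w = (\<chi> i j. \<Sum>k\<in>UNIV. pd (\<lambda>y. g y $ i $ j) x k * w $ k)"

lemma christoffel_lowered:
  assumes "invertible (g x)"
  shows "(\<Sum>\<alpha>\<in>UNIV. g x $ \<gamma> $ \<alpha> * Gamma g x \<alpha> \<beta> \<mu>) =
    (pd (\<lambda>y. g y $ \<gamma> $ \<mu>) x \<beta> + pd (\<lambda>y. g y $ \<gamma> $ \<beta>) x \<mu> - pd (\<lambda>y. g y $ \<beta> $ \<mu>) x \<gamma>) / 2"
proof -
  define a where "a = (\<chi> d. pd (\<lambda>y. g y $ d $ \<mu>) x \<beta> + pd (\<lambda>y. g y $ d $ \<beta>) x \<mu>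
                                - pd (\<lambda>y. g y $ \<beta> $ \<mu>) x d)"
  have Gamma_eq: "Gamma g x \<alpha> \<beta> \<mu> = (ginv g x *v a) $ \<alpha> / 2" for \<alpha>
    by (simp add: Gamma_def a_def matrix_vector_mult_nth)
  have "(\<Sum>\<alpha>\<in>UNIV. g x $ \<gamma> $ \<alpha> * Gamma g x \<alpha> \<beta> \<mu>) = (g x *v (ginv g x *v a)) $ \<gamma> / 2"
    unfolding Gamma_eq matrix_vector_mult_nth[of "g x"] by (simp add: sum_divide_distrib)
  also have "\<dots> = a $ \<gamma> / 2"
    using assms by (simp add: matrix_vector_mul_assoc ginv_def matrix_inv_right)
  finally show ?thesis by (simp add: a_def)
qed

lemma metric_pd_symmetric:
  assumes "metric_field g U" "x \<in> U"
  shows "pd (\<lambda>y. g y $ i $ j) x k = pd (\<lambda>y. g y $ j $ i) x k"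
proof -
  have "open U" and sym: "\<And>y. y \<in> U \<Longrightarrow> transpose (g y) = g y"
    using assms(1) by (auto simp: metric_field_def)
  have "frechet_derivative (\<lambda>y. g y $ i $ j) (at x) = frechet_derivative (\<lambda>y. g y $ j $ i) (at x)"
    using metric_field_at(3)[OF assms] \<open>open U\<close> assms(2)
    by (rule frechet_derivative_transform_within_open) (rule symmetric_matrix_nth[OF sym])
  then show ?thesis by (simp add: pd_def)
qed

lemma metric_times_conn:
  assumes "invertible (g x)"
  shows "(g x ** connection_matrix g x w) $ \<mu> $ \<gamma> = (\<Sum>\<beta>\<in>UNIV. w $ \<beta> *
    ((pd (\<lambda>y. g y $ \<mu> $ \<gamma>) x \<beta> + pd (\<lambda>y. g y $ \<mu> $ \<beta>) x \<gamma> - pd (\<lambda>y. g y $ \<beta> $ \<gamma>) x \<mu>) / 2))"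
proof -
  have "(g x ** connection_matrix g x w) $ \<mu> $ \<gamma>
      = (\<Sum>\<alpha>\<in>UNIV. \<Sum>\<beta>\<in>UNIV. w $ \<beta> * (g x $ \<mu> $ \<alpha> * Gamma g x \<alpha> \<beta> \<gamma>))"
    by (simp add: connection_matrix_def matrix_matrix_mult_nth sum_distrib_left mult_ac)
  also have "\<dots> = (\<Sum>\<beta>\<in>UNIV. w $ \<beta> * (\<Sum>\<alpha>\<in>UNIV. g x $ \<mu> $ \<alpha> * Gamma g x \<alpha> \<beta> \<gamma>))"
    by (subst sum.swap) (simp add: sum_distrib_left)
  finally show ?thesis by (simp add: christoffel_lowered[of g x, OF assms])
qed

lemma metric_compatibility:
  assumes "metric_field g U" "x \<in> U"
  shows "metric_dir_deriv g x w = transpose (connection_matrix g x w) ** g x + g x ** connection_matrix g x w"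
proof -
  define A where "A = connection_matrix g x w"
  define dg where "dg i j k = pd (\<lambda>y. g y $ i $ j) x k" for i j k
  note dg_sym = metric_pd_symmetric[OF assms, folded dg_def]
  have GA: "(g x ** A) $ \<mu> $ \<gamma> = (\<Sum>\<beta>\<in>UNIV. w $ \<beta> * ((dg \<mu> \<gamma> \<beta> + dg \<mu> \<beta> \<gamma> - dg \<beta> \<gamma> \<mu>) / 2))"
    for \<mu> \<gamma>
    unfolding A_def dg_def by (rule metric_times_conn[of g x, OF metric_field_at(2)[OF assms]])
  have "transpose A ** g x = transpose (g x ** A)"
    by (simp add: matrix_transpose_mul metric_field_at(1)[OF assms])
  then have AG: "(transpose A ** g x) $ \<mu> $ \<gamma> = (g x ** A) $ \<gamma> $ \<mu>" for \<mu> \<gamma>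
    by (simp add: transpose_def)
  have "(transpose A ** g x + g x ** A) $ \<mu> $ \<gamma> = (\<Sum>\<beta>\<in>UNIV. w $ \<beta> * dg \<mu> \<gamma> \<beta>)" for \<mu> \<gamma>
    unfolding vector_add_component AG GA sum.distrib[symmetric] distrib_left[symmetric]
  proof (intro sum.cong refl arg_cong[where f="\<lambda>t. w $ _ * t"])
    fix \<beta>
    show "(dg \<gamma> \<mu> \<beta> + dg \<gamma> \<beta> \<mu> - dg \<beta> \<mu> \<gamma>) / 2 + (dg \<mu> \<gamma> \<beta> + dg \<mu> \<beta> \<gamma> - dg \<beta> \<gamma> \<mu>) / 2
        = dg \<mu> \<gamma> \<beta>"
      using dg_sym[of \<gamma> \<mu> \<beta>] dg_sym[of \<gamma> \<beta> \<mu>] dg_sym[of \<mu> \<beta> \<gamma>] by (simp add: field_simps)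
  qed
  then show ?thesis
    by (simp add: vec_eq_iff metric_dir_deriv_def A_def dg_def mult.commute)
qed

lemma Riem_low_antisymmetric:
  "transpose (\<chi> \<mu> \<sigma>. Riem_low g x \<kappa> l \<mu> \<sigma>) = - (\<chi> \<mu> \<sigma>. Riem_low g x \<kappa> l \<mu> \<sigma>)"
proof -
  have up_anti: "Riem_up g x \<rho> l \<mu> \<sigma> = - Riem_up g x \<rho> l \<sigma> \<mu>" for \<rho> \<mu> \<sigma>
    by (simp add: Riem_up_def sum_subtractf algebra_simps)
  have anti: "Riem_low g x \<kappa> l \<sigma> \<mu> = - Riem_low g x \<kappa> l \<mu> \<sigma>" for \<mu> \<sigma>
    by (simp add: Riem_low_def sum_negf up_anti[of _ \<sigma> \<mu>])
  show ?thesis by (rule antisymmetric_matrixI) (simp only: vec_lambda_beta, rule anti)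
qed

lemma Riem_mixed_lowered:
  assumes "transpose (g x) = g x" "invertible (g x)"
  shows "(\<Sum>\<nu>\<in>UNIV. Riem_mixed g x \<kappa> l \<mu> \<nu> * (g x *v w) $ \<nu>)
    = (\<Sum>\<sigma>\<in>UNIV. Riem_low g x \<kappa> l \<mu> \<sigma> * w $ \<sigma>)"
proof -
  define r where "r = (\<chi> \<sigma>. Riem_low g x \<kappa> l \<mu> \<sigma>)"
  have "(g x *v w) v* ginv g x = w v* (g x ** ginv g x)"
    by (metis assms(1) transpose_matrix_vector vector_matrix_mul_assoc)
  also have "\<dots> = w" using assms(2) by (simp add: ginv_def matrix_inv_right)
  finally have lowered_raised: "(g x *v w) v* ginv g x = w" .
  have "(\<Sum>\<nu>\<in>UNIV. Riem_mixed g x \<kappa> l \<mu> \<nu> * (g x *v w) $ \<nu>) = (ginv g x *v r) \<bullet> (g x *v w)"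
    by (simp add: Riem_mixed_def r_def inner_vec_def matrix_vector_mult_nth)
  also have "\<dots> = r \<bullet> w"
    by (metis dot_lmul_matrix inner_commute lowered_raised)
  finally show ?thesis by (simp add: r_def inner_vec_def)
qed

lemma curvature_force_orthogonal:
  assumes "transpose (g x) = g x" "invertible (g x)"
  shows "(\<Sum>\<nu>\<in>UNIV. (\<Sum>\<kappa>\<in>UNIV. \<Sum>l\<in>UNIV. \<Sum>\<mu>\<in>UNIV.
            S $ \<kappa> $ l * w $ \<mu> * Riem_mixed g x \<kappa> l \<mu> \<nu>) * (g x *v w) $ \<nu>) = 0"
proof -
  define R where "R \<kappa> l = (\<chi> \<mu> \<sigma>. Riem_low g x \<kappa> l \<mu> \<sigma>)" for \<kappa> l
  have "(\<Sum>\<nu>\<in>UNIV. (\<Sum>\<kappa>\<in>UNIV. \<Sum>l\<in>UNIV. \<Sum>\<mu>\<in>UNIV.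
            S $ \<kappa> $ l * w $ \<mu> * Riem_mixed g x \<kappa> l \<mu> \<nu>) * (g x *v w) $ \<nu>)
      = (\<Sum>\<nu>\<in>UNIV. \<Sum>\<kappa>\<in>UNIV. \<Sum>l\<in>UNIV. \<Sum>\<mu>\<in>UNIV.
            S $ \<kappa> $ l * w $ \<mu> * (Riem_mixed g x \<kappa> l \<mu> \<nu> * (g x *v w) $ \<nu>))"
    by (simp add: sum_distrib_right mult.assoc)
  also have "\<dots> = (\<Sum>\<kappa>\<in>UNIV. \<Sum>l\<in>UNIV. \<Sum>\<mu>\<in>UNIV. \<Sum>\<nu>\<in>UNIV.
            S $ \<kappa> $ l * w $ \<mu> * (Riem_mixed g x \<kappa> l \<mu> \<nu> * (g x *v w) $ \<nu>))"
    by (subst sum.swap, rule sum.cong[OF refl], subst sum.swap, rule sum.cong[OF refl], rule sum.swap)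
  also have "\<dots> = (\<Sum>\<kappa>\<in>UNIV. \<Sum>l\<in>UNIV. S $ \<kappa> $ l *
                    (\<Sum>\<mu>\<in>UNIV. w $ \<mu> * (\<Sum>\<sigma>\<in>UNIV. Riem_low g x \<kappa> l \<mu> \<sigma> * w $ \<sigma>)))"
    by (simp add: sum_distrib_left[symmetric] Riem_mixed_lowered[of g x, OF assms] mult.assoc)
  also have "\<dots> = (\<Sum>\<kappa>\<in>UNIV. \<Sum>l\<in>UNIV. S $ \<kappa> $ l * (w \<bullet> (R \<kappa> l *v w)))"
    by (simp add: R_def inner_vec_def matrix_vector_mult_nth)
  also have "\<dots> = 0"
    by (simp add: R_def antisymmetric_matrix_dot[OF Riem_low_antisymmetric])
  finally show ?thesis .
qed

lemma has_vector_derivative_vec_nth: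
  "(f has_vector_derivative f') (at s) \<Longrightarrow> ((\<lambda>t. f t $ i) has_vector_derivative f' $ i) (at s)"
  using bounded_linear.has_vector_derivative[OF bounded_linear_vec_nth] .

lemma has_real_derivative_vec_nth:
  "(f has_vector_derivative f') (at s) \<Longrightarrow> ((\<lambda>t. f t $ i) has_real_derivative f' $ i) (at s)"
  using has_vector_derivative_vec_nth by (simp add: has_real_derivative_iff_has_vector_derivative)

lemma pd_chain_rule:
  fixes h :: "real^'n \<Rightarrow> real"
  assumes h: "h differentiable (at (z s))" and z: "(z has_vector_derivative w) (at s)"
  shows "((\<lambda>t. h (z t)) has_real_derivative (\<Sum>k\<in>UNIV. pd h (z s) k * w $ k)) (at s)"
proof -
  let ?L = "frechet_derivative h (at (z s))"
  have h': "(h has_derivative ?L) (at (z s))" using h frechet_derivative_works by blast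
  then have lin: "linear ?L" using has_derivative_linear by blast
  have "?L w = ?L (\<Sum>k\<in>UNIV. w $ k *\<^sub>R axis k 1)"
    by (simp add: basis_expansion flip: scalar_mult_eq_scaleR)
  also have "\<dots> = (\<Sum>k\<in>UNIV. pd h (z s) k * w $ k)"
    by (simp add: linear_sum[OF lin] linear_scale[OF lin] pd_def mult.commute)
  finally have Lw: "?L w = (\<Sum>k\<in>UNIV. pd h (z s) k * w $ k)" .
  have "((h \<circ> z) has_derivative (\<lambda>r. ?L (r *\<^sub>R w))) (at s)"
    using diff_chain_at[OF z[unfolded has_vector_derivative_def] h'] by (simp add: comp_def)
  moreover have "(\<lambda>r. ?L (r *\<^sub>R w)) = (*) (\<Sum>k\<in>UNIV. pd h (z s) k * w $ k)"
    by (rule ext) (simp add: linear_scale[OF lin] Lw)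
  ultimately show ?thesis by (simp add: has_field_derivative_def comp_def)
qed

lemma metric_chain_rule:
  assumes "\<And>i j. (\<lambda>y. g y $ i $ j) differentiable (at (z s))" "(z has_vector_derivative w) (at s)"
  shows "((\<lambda>t. g (z t) $ i $ j) has_real_derivative metric_dir_deriv g (z s) w $ i $ j) (at s)"
  unfolding metric_dir_deriv_def using pd_chain_rule[OF assms] by (simp add: mult.commute)

lemma matrix_vector_product_derivative:
  assumes G: "\<And>i j. ((\<lambda>t. G t $ i $ j) has_real_derivative G' $ i $ j) (at s)"
    and X: "(X has_vector_derivative X') (at s)"
  shows "((\<lambda>t. (G t *v X t) $ \<mu>) has_real_derivative (G' *v X s + G s *v X') $ \<mu>) (at s)"
  unfolding matrix_vector_mult_nth vector_add_component
  using DERIV_sum[OF DERIV_mult[OF G has_real_derivative_vec_nth[OF X]]]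
  by (simp add: sum.distrib mult.commute)

lemma inner_derivative_componentwise:
  assumes W: "\<And>\<mu>. ((\<lambda>t. W t $ \<mu>) has_real_derivative W' $ \<mu>) (at s)"
    and Y: "\<And>\<mu>. ((\<lambda>t. Y t $ \<mu>) has_real_derivative Y' $ \<mu>) (at s)"
  shows "((\<lambda>t. W t \<bullet> Y t) has_real_derivative W' \<bullet> Y s + W s \<bullet> Y') (at s)"
proof -
  have "((\<lambda>t. \<Sum>\<mu>\<in>UNIV. W t $ \<mu> * Y t $ \<mu>) has_real_derivative
      (\<Sum>\<mu>\<in>UNIV. W s $ \<mu> * Y' $ \<mu> + W' $ \<mu> * Y s $ \<mu>)) (at s)"
    by (intro DERIV_sum DERIV_mult' W Y)
  then show ?thesis by (simp add: inner_vec_def sum.distrib add.commute)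
qed

lemma vector_matrix_derivative_componentwise:
  assumes W: "\<And>\<mu>. ((\<lambda>t. W t $ \<mu>) has_real_derivative W' $ \<mu>) (at s)"
    and S: "(S has_vector_derivative S') (at s)"
  shows "((\<lambda>t. (W t v* S t) $ \<nu>) has_real_derivative (W' v* S s + W s v* S') $ \<nu>) (at s)"
proof -
  have S_nth: "((\<lambda>t. S t $ \<mu> $ \<nu>) has_real_derivative S' $ \<mu> $ \<nu>) (at s)" for \<mu>
    using has_vector_derivative_vec_nth[OF has_vector_derivative_vec_nth[OF S]]
    by (simp add: has_real_derivative_iff_has_vector_derivative)
  have "((\<lambda>t. \<Sum>\<mu>\<in>UNIV. W t $ \<mu> * S t $ \<mu> $ \<nu>) has_real_derivative
      (\<Sum>\<mu>\<in>UNIV. W s $ \<mu> * S' $ \<mu> $ \<nu> + W' $ \<mu> * S s $ \<mu> $ \<nu>)) (at s)"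
    by (intro DERIV_sum DERIV_mult' W S_nth)
  then show ?thesis by (simp add: vector_matrix_mult_nth sum.distrib add.commute)
qed

lemma derivative_zero_if_locally_constant:
  assumes "(f has_real_derivative D) (at s)" "open T" "s \<in> T" "\<And>t. t \<in> T \<Longrightarrow> f t = c"
  shows "D = 0"
proof -
  have "((\<lambda>_. c) has_real_derivative D) (at s)"
    using assms by (auto intro: has_field_derivative_transform_within_open)
  then show ?thesis using DERIV_const DERIV_unique by blast
qed

definition covd_vec :: "(real^'n \<Rightarrow> real^'n^'n) \<Rightarrow> (real \<Rightarrow> real^'n) \<Rightarrow> (real \<Rightarrow> real^'n)
    \<Rightarrow> (real \<Rightarrow> real^'n) \<Rightarrow> real \<Rightarrow> real^'n" where
  "covd_vec g z v X s = vector_derivative X (at s) + connection_matrix g (z s) (v s) *v X s"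

definition covd_ten :: "(real^'n \<Rightarrow> real^'n^'n) \<Rightarrow> (real \<Rightarrow> real^'n) \<Rightarrow> (real \<Rightarrow> real^'n)
    \<Rightarrow> (real \<Rightarrow> real^'n^'n) \<Rightarrow> real \<Rightarrow> real^'n^'n" where
  "covd_ten g z v S s = vector_derivative S (at s)
     + connection_matrix g (z s) (v s) ** S s + S s ** transpose (connection_matrix g (z s) (v s))"

lemma cov_vec_eq: "cov_vec g z v X s \<nu> = covd_vec g z v X s $ \<nu>"
proof -
  have "(\<Sum>\<alpha>\<in>UNIV. \<Sum>\<beta>\<in>UNIV. Gamma g (z s) \<nu> \<alpha> \<beta> * v s $ \<alpha> * X s $ \<beta>)
      = (\<Sum>\<beta>\<in>UNIV. \<Sum>\<alpha>\<in>UNIV. Gamma g (z s) \<nu> \<alpha> \<beta> * v s $ \<alpha> * X s $ \<beta>)"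
    by (rule sum.swap)
  then show ?thesis
    by (simp add: cov_vec_def covd_vec_def connection_matrix_def matrix_vector_mult_nth sum_distrib_right)
qed

lemma cov_ten2_eq: "cov_ten2 g z v S s \<kappa> l = covd_ten g z v S s $ \<kappa> $ l"
proof -
  have "(\<Sum>\<alpha>\<in>UNIV. \<Sum>\<beta>\<in>UNIV. Gamma g (z s) \<kappa> \<alpha> \<beta> * v s $ \<alpha> * S s $ \<beta> $ l
                           + Gamma g (z s) l \<alpha> \<beta> * v s $ \<alpha> * S s $ \<kappa> $ \<beta>)
      = (\<Sum>\<beta>\<in>UNIV. \<Sum>\<alpha>\<in>UNIV. Gamma g (z s) \<kappa> \<alpha> \<beta> * v s $ \<alpha> * S s $ \<beta> $ l
                           + Gamma g (z s) l \<alpha> \<beta> * v s $ \<alpha> * S s $ \<kappa> $ \<beta>)"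
    by (rule sum.swap)
  then show ?thesis
    by (simp add: cov_ten2_def covd_ten_def connection_matrix_def matrix_matrix_mult_nth transpose_def
        sum_distrib_right sum_distrib_left sum.distrib mult_ac)
qed

lemma lower_eq: "lower g x X \<mu> = (g x *v X) $ \<mu>"
  by (simp add: lower_def matrix_vector_mult_nth)

lemma lower_dot: "(\<Sum>\<mu>\<in>UNIV. lower g x X \<mu> * Y $ \<mu>) = (g x *v X) \<bullet> Y"
  by (simp add: lower_eq inner_vec_def)

lemma dot_lower: "(\<Sum>\<mu>\<in>UNIV. Y $ \<mu> * lower g x X \<mu>) = Y \<bullet> (g x *v X)"
  by (simp add: lower_eq inner_vec_def)

lemma lower_contract: "(\<Sum>\<mu>\<in>UNIV. lower g x X \<mu> * S $ \<mu> $ \<nu>) = ((g x *v X) v* S) $ \<nu>"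
  by (simp add: lower_eq vector_matrix_mult_nth)

lemma lowered_derivative:
  assumes g: "metric_field g U" "z s \<in> U" and z: "(z has_vector_derivative w) (at s)"
    and X: "(X has_vector_derivative X') (at s)"
  shows "((\<lambda>t. (g (z t) *v X t) $ \<mu>) has_real_derivative
     (g (z s) *v (X' + connection_matrix g (z s) w *v X s) + transpose (connection_matrix g (z s) w) *v (g (z s) *v X s)) $ \<mu>) (at s)"
proof -
  define A where "A = connection_matrix g (z s) w"
  have "((\<lambda>t. (g (z t) *v X t) $ \<mu>) has_real_derivative
      (metric_dir_deriv g (z s) w *v X s + g (z s) *v X') $ \<mu>) (at s)"
    by (rule matrix_vector_product_derivative[OF metric_chain_rule[OF metric_field_at(3)[OF g] z] X])
  moreover have "metric_dir_deriv g (z s) w *v X s + g (z s) *v X'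
      = g (z s) *v (X' + A *v X s) + transpose A *v (g (z s) *v X s)"
    unfolding metric_compatibility[OF g] A_def
    by (simp add: matrix_vector_mult_add_rdistrib matrix_vector_right_distrib matrix_vector_mul_assoc)
  ultimately show ?thesis by (simp add: A_def)
qed

lemma cov_covec_lowered:
  assumes g: "metric_field g U" "z s \<in> U" and z: "(z has_vector_derivative v s) (at s)"
    and X: "X differentiable (at s)"
  shows "cov_covec g z v (\<lambda>t. lower g (z t) (X t)) s \<mu> = (g (z s) *v covd_vec g z v X s) $ \<mu>"
proof -
  define A where "A = connection_matrix g (z s) (v s)"
  have "deriv (\<lambda>t. lower g (z t) (X t) \<mu>) s
      = (g (z s) *v covd_vec g z v X s + transpose A *v (g (z s) *v X s)) $ \<mu>"
    unfolding lower_eq covd_vec_def A_def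
    by (rule DERIV_imp_deriv[OF lowered_derivative[OF g z vector_derivative_works[THEN iffD1, OF X]]])
  moreover have "(\<Sum>\<alpha>\<in>UNIV. \<Sum>\<beta>\<in>UNIV. Gamma g (z s) \<alpha> \<beta> \<mu> * v s $ \<beta> * lower g (z s) (X s) \<alpha>)
      = (transpose A *v (g (z s) *v X s)) $ \<mu>"
    by (simp add: A_def connection_matrix_def lower_eq vector_matrix_mult_nth sum_distrib_left mult_ac)
  ultimately show ?thesis by (simp add: cov_covec_def)
qed

lemma lowered_pairing_derivative:
  assumes g: "metric_field g U" "z s \<in> U" and z: "(z has_vector_derivative v s) (at s)"
    and X: "X differentiable (at s)" and Y: "Y differentiable (at s)"
  shows "((\<lambda>t. (g (z t) *v X t) \<bullet> Y t) has_real_derivative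
     (g (z s) *v covd_vec g z v X s) \<bullet> Y s + (g (z s) *v X s) \<bullet> covd_vec g z v Y s) (at s)"
proof -
  define A where "A = connection_matrix g (z s) (v s)"
  define W where "W = g (z s) *v X s"
  have "((\<lambda>t. (g (z t) *v X t) \<bullet> Y t) has_real_derivative
      (g (z s) *v covd_vec g z v X s + transpose A *v W) \<bullet> Y s + W \<bullet> vector_derivative Y (at s)) (at s)"
    unfolding A_def W_def covd_vec_def
  proof (rule inner_derivative_componentwise)
    show "((\<lambda>t. (g (z t) *v X t) $ \<mu>) has_real_derivative
        (g (z s) *v (vector_derivative X (at s) + connection_matrix g (z s) (v s) *v X s)
          + transpose (connection_matrix g (z s) (v s)) *v (g (z s) *v X s)) $ \<mu>) (at s)" for \<mu>
      using X by (intro lowered_derivative[OF g z]) (simp add: vector_derivative_works)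
    show "((\<lambda>t. Y t $ \<mu>) has_real_derivative vector_derivative Y (at s) $ \<mu>) (at s)" for \<mu>
      using Y by (intro has_real_derivative_vec_nth) (simp add: vector_derivative_works)
  qed
  moreover have "(transpose A *v W) \<bullet> Y s = W \<bullet> (A *v Y s)"
    by (simp add: dot_lmul_matrix)
  ultimately show ?thesis
    by (simp add: covd_vec_def A_def W_def inner_add_left inner_add_right add_ac)
qed

text \<open>Leibniz rule for the contraction (g X)_\<mu> S^{\<mu>\<nu>}; the last term is the connection
  acting on the free index \<nu>.\<close>
lemma lowered_contraction_derivative:
  assumes g: "metric_field g U" "z s \<in> U" and z: "(z has_vector_derivative v s) (at s)"
    and X: "X differentiable (at s)" and S: "S differentiable (at s)"
  shows "((\<lambda>t. ((g (z t) *v X t) v* S t) $ \<nu>) has_real_derivative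
     ((g (z s) *v covd_vec g z v X s) v* S s + (g (z s) *v X s) v* covd_ten g z v S s
       - connection_matrix g (z s) (v s) *v ((g (z s) *v X s) v* S s)) $ \<nu>) (at s)"
proof -
  define A where "A = connection_matrix g (z s) (v s)"
  define W where "W = g (z s) *v X s"
  have "((\<lambda>t. ((g (z t) *v X t) v* S t) $ \<nu>) has_real_derivative
      ((g (z s) *v covd_vec g z v X s + transpose A *v W) v* S s
        + W v* vector_derivative S (at s)) $ \<nu>) (at s)"
    unfolding A_def W_def covd_vec_def
  proof (rule vector_matrix_derivative_componentwise)
    show "((\<lambda>t. (g (z t) *v X t) $ \<mu>) has_real_derivative
        (g (z s) *v (vector_derivative X (at s) + connection_matrix g (z s) (v s) *v X s)
          + transpose (connection_matrix g (z s) (v s)) *v (g (z s) *v X s)) $ \<mu>) (at s)" for \<mu>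
      using X by (intro lowered_derivative[OF g z]) (simp add: vector_derivative_works)
    show "(S has_vector_derivative vector_derivative S (at s)) (at s)"
      using S by (simp add: vector_derivative_works)
  qed
  moreover have "(transpose A *v W) v* S s = W v* (A ** S s)"
    by (simp add: vector_matrix_mul_assoc)
  moreover have "W v* (S s ** transpose A) = A *v (W v* S s)"
    by (simp flip: vector_matrix_mul_assoc)
  ultimately show ?thesis
    by (simp add: covd_ten_def A_def W_def vector_matrix_left_distrib
        vector_matrix_mult_add_rdistrib add_ac)
qed

lemma covd_vec_scaleR:
  assumes "open T" "s \<in> T" and p: "\<And>t. t \<in> T \<Longrightarrow> p t = M t *\<^sub>R u t"
    and M: "(M has_real_derivative m') (at s)" and u: "u differentiable (at s)"
  shows "covd_vec g z v p s = m' *\<^sub>R u s + M s *\<^sub>R covd_vec g z v u s"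
proof -
  have "((\<lambda>t. M t *\<^sub>R u t) has_vector_derivative
      M s *\<^sub>R vector_derivative u (at s) + m' *\<^sub>R u s) (at s)"
    using M u by (intro has_vector_derivative_scaleR) (auto simp: vector_derivative_works)
  then have "(p has_vector_derivative M s *\<^sub>R vector_derivative u (at s) + m' *\<^sub>R u s) (at s)"
    by (rule has_vector_derivative_transform_within_open[OF _ assms(1,2)]) (simp add: p)
  then show ?thesis
    using p[OF assms(2)]
    by (simp add: covd_vec_def vector_derivative_at algebra_simps)
qed

lemma covd_ten_antisymmetric:
  assumes "open T" "s \<in> T" and S_anti: "\<And>t. t \<in> T \<Longrightarrow> transpose (S t) = - S t"
    and S: "S differentiable (at s)"
  shows "transpose (covd_ten g z v S s) = - covd_ten g z v S s"
proof -
  define S' where "S' = vector_derivative S (at s)"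
  have dS: "(S has_vector_derivative S') (at s)"
    using S by (simp add: S'_def vector_derivative_works)
  have S_nth: "((\<lambda>t. S t $ i $ j) has_real_derivative S' $ i $ j) (at s)" for i j
    by (rule has_real_derivative_vec_nth[OF has_vector_derivative_vec_nth[OF dS]])
  have S_nth_anti: "S t $ j $ i = - S t $ i $ j" if "t \<in> T" for t i j
  proof -
    have "S t $ j $ i = transpose (S t) $ i $ j" by (simp add: transpose_def)
    then show ?thesis using S_anti[OF that] by simp
  qed
  have minus_deriv: "((\<lambda>t. S t $ j $ i) has_real_derivative - S' $ i $ j) (at s)" for i j
    by (rule has_field_derivative_transform_within_open[OF DERIV_minus[OF S_nth[of i j]] assms(1,2)])
      (rule S_nth_anti[symmetric])
  have S'_nth: "S' $ j $ i = - S' $ i $ j" for i j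
    by (rule DERIV_unique[OF S_nth minus_deriv])
  have "transpose S' $ i $ j = (- S') $ i $ j" for i j
    using S'_nth[of i j] by (simp add: transpose_def)
  then have S'_anti: "transpose S' = - S'" by (simp add: vec_eq_iff)
  show ?thesis
    by (simp add: covd_ten_def S'_def[symmetric] transpose_add matrix_transpose_mul S'_anti
        S_anti[OF assms(2)] matrix_mult_uminus_left matrix_mult_uminus_right)
qed

lemma constant_norm_orthogonal:
  assumes g: "metric_field g U" "z s \<in> U" and z: "(z has_vector_derivative v s) (at s)"
    and X: "X differentiable (at s)" and T: "open T" "s \<in> T"
    and const: "\<And>t. t \<in> T \<Longrightarrow> (g (z t) *v X t) \<bullet> X t = c"
  shows "(g (z s) *v X s) \<bullet> covd_vec g z v X s = 0"
proof -
  have "(g (z s) *v covd_vec g z v X s) \<bullet> X s + (g (z s) *v X s) \<bullet> covd_vec g z v X s = 0"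
    using lowered_pairing_derivative[of g U z s v, OF g z X X] T const by (rule derivative_zero_if_locally_constant)
  moreover have "(g (z s) *v covd_vec g z v X s) \<bullet> X s = (g (z s) *v X s) \<bullet> covd_vec g z v X s"
    by (metis symmetric_matrix_dot[OF metric_field_at(1)[OF g]] inner_commute)
  ultimately show ?thesis by simp
qed

lemma annihilation_transported:
  assumes g: "metric_field g U" "z s \<in> U" and z: "(z has_vector_derivative v s) (at s)"
    and X: "X differentiable (at s)" and S: "S differentiable (at s)" and T: "open T" "s \<in> T"
    and ann: "\<And>t. t \<in> T \<Longrightarrow> (g (z t) *v X t) v* S t = 0"
  shows "(g (z s) *v covd_vec g z v X s) v* S s + (g (z s) *v X s) v* covd_ten g z v S s = 0"
proof -
  have "((g (z s) *v covd_vec g z v X s) v* S s + (g (z s) *v X s) v* covd_ten g z v S s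
        - connection_matrix g (z s) (v s) *v ((g (z s) *v X s) v* S s)) $ \<nu> = 0" for \<nu>
    using lowered_contraction_derivative[of g U z s v, OF g z X S] T
    by (rule derivative_zero_if_locally_constant) (simp add: ann)
  then show ?thesis by (simp add: vec_eq_iff ann[OF T(2)])
qed

text \<open>The curvature term of the force F = Dp - (1/2) S v R is orthogonal to v, so F.v = (Dp).v.\<close>
lemma force_along_velocity:
  assumes "transpose (g (z s)) = g (z s)" "invertible (g (z s))"
  shows "(\<Sum>\<mu>\<in>UNIV. force g z v p S s \<mu> * lower g (z s) (v s) \<mu>)
    = covd_vec g z v p s \<bullet> (g (z s) *v v s)"
proof -
  define curv where "curv \<nu> = (\<Sum>\<kappa>\<in>UNIV. \<Sum>l\<in>UNIV. \<Sum>\<mu>\<in>UNIV.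
          S s $ \<kappa> $ l * v s $ \<mu> * Riem_mixed g (z s) \<kappa> l \<mu> \<nu>)" for \<nu>
  have "force g z v p S s \<mu> = covd_vec g z v p s $ \<mu> - (1/2) * curv \<mu>" for \<mu>
    by (simp add: force_def cov_vec_eq curv_def)
  then have "(\<Sum>\<mu>\<in>UNIV. force g z v p S s \<mu> * lower g (z s) (v s) \<mu>)
      = covd_vec g z v p s \<bullet> (g (z s) *v v s) - (1/2) * (\<Sum>\<nu>\<in>UNIV. curv \<nu> * (g (z s) *v v s) $ \<nu>)"
    by (simp add: lower_eq inner_vec_def left_diff_distrib sum_subtractf sum_distrib_left mult.assoc)
  moreover have "(\<Sum>\<nu>\<in>UNIV. curv \<nu> * (g (z s) *v v s) $ \<nu>) = 0"
    unfolding curv_def using assms by (rule curvature_force_orthogonal)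
  ultimately show ?thesis by simp
qed

lemma torque_contraction:
  assumes g: "metric_field g U" "z s \<in> U" and z: "(z has_vector_derivative v s) (at s)"
    and X: "X differentiable (at s)"
  shows "(\<Sum>\<mu>\<in>UNIV. \<Sum>\<nu>\<in>UNIV. lower g (z s) (X s) \<nu>
            * cov_covec g z v (\<lambda>t. lower g (z t) (X t)) s \<mu> * torque g z v p S s \<mu> \<nu>)
    = (\<Sum>\<mu>\<in>UNIV. \<Sum>\<nu>\<in>UNIV. (g (z s) *v X s) $ \<nu> * (g (z s) *v covd_vec g z v X s) $ \<mu>
            * (covd_ten g z v S s $ \<mu> $ \<nu> - (p s $ \<mu> * v s $ \<nu> - p s $ \<nu> * v s $ \<mu>)))"
proof -
  have "torque g z v p S s \<mu> \<nu> = covd_ten g z v S s $ \<mu> $ \<nu> - (p s $ \<mu> * v s $ \<nu> - p s $ \<nu> * v s $ \<mu>)"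
    for \<mu> \<nu>
    by (simp add: torque_def cov_ten2_eq field_simps)
  then show ?thesis by (simp add: cov_covec_lowered[of g U z s v, OF g z X] lower_eq)
qed

text \<open>With p = m u and Dp = m' u + m Du, the
  work F.v = Dp.v plus the torque term u_\<nu> (Du)_\<mu> L^{\<mu>\<nu>} equals m' (u.v): the spin part of the
  torque vanishes by the transported constraint and antisymmetry of S, and its orbital part
  cancels m (Du).v.\<close>
lemma mass_rate_identity:
  fixes G S DS :: "real^'n^'n" and u v Du p Dp :: "real^'n" and m m' :: real
  assumes G_sym: "transpose G = G"
    and unit: "(G *v u) \<bullet> u = -1"
    and ortho: "(G *v u) \<bullet> Du = 0"
    and transport: "(G *v Du) v* S + (G *v u) v* DS = 0"
    and S_anti: "transpose S = - S" and DS_anti: "transpose DS = - DS"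
    and uv: "u \<bullet> (G *v v) \<noteq> 0"
    and p: "p = m *\<^sub>R u" and Dp: "Dp = m' *\<^sub>R u + m *\<^sub>R Du"
  shows "m' = inverse (u \<bullet> (G *v v)) * (Dp \<bullet> (G *v v)
       + (\<Sum>\<mu>\<in>UNIV. \<Sum>\<nu>\<in>UNIV. (G *v u) $ \<nu> * (G *v Du) $ \<mu>
            * (DS $ \<mu> $ \<nu> - (p $ \<mu> * v $ \<nu> - p $ \<nu> * v $ \<mu>))))"
proof -
  have orbital_p: "p $ \<mu> * v $ \<nu> - p $ \<nu> * v $ \<mu> = m * (u $ \<mu> * v $ \<nu> - u $ \<nu> * v $ \<mu>)" for \<mu> \<nu>
    by (simp add: p algebra_simps)
  define ul where "ul = G *v u"
  define Dul where "Dul = G *v Du"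
  define c where "c = u \<bullet> (G *v v)"
  have spin: "(\<Sum>\<mu>\<in>UNIV. \<Sum>\<nu>\<in>UNIV. ul $ \<nu> * Dul $ \<mu> * DS $ \<mu> $ \<nu>) = 0"
  proof -
    have "DS *v ul = Dul v* S"
      using transport DS_anti unfolding ul_def Dul_def
      by (metis add.inverse_unique minus_minus transpose_matrix_vector matrix_vector_mult_uminus_left)
    then have "(\<Sum>\<mu>\<in>UNIV. \<Sum>\<nu>\<in>UNIV. ul $ \<nu> * Dul $ \<mu> * DS $ \<mu> $ \<nu>) = Dul \<bullet> (Dul v* S)"
      by (simp flip: \<open>DS *v ul = Dul v* S\<close>
          add: inner_vec_def matrix_vector_mult_nth sum_distrib_left mult_ac)
    also have "\<dots> = Dul \<bullet> (S *v Dul)"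
      by (metis dot_lmul_matrix inner_commute)
    finally show ?thesis using antisymmetric_matrix_dot[OF S_anti] by simp
  qed
  have orbital: "(\<Sum>\<mu>\<in>UNIV. \<Sum>\<nu>\<in>UNIV. ul $ \<nu> * Dul $ \<mu> * (u $ \<mu> * v $ \<nu> - u $ \<nu> * v $ \<mu>))
      = (Dul \<bullet> u) * (ul \<bullet> v) - (Dul \<bullet> v) * (ul \<bullet> u)"
  proof -
    have "(\<Sum>\<mu>\<in>UNIV. \<Sum>\<nu>\<in>UNIV. ul $ \<nu> * Dul $ \<mu> * (u $ \<mu> * v $ \<nu> - u $ \<nu> * v $ \<mu>))
        = (\<Sum>\<mu>\<in>UNIV. \<Sum>\<nu>\<in>UNIV. (Dul $ \<mu> * u $ \<mu>) * (ul $ \<nu> * v $ \<nu>)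
                                 - (Dul $ \<mu> * v $ \<mu>) * (ul $ \<nu> * u $ \<nu>))"
      by (intro sum.cong refl) (simp add: algebra_simps)
    then show ?thesis by (simp add: inner_vec_def sum_subtractf sum_product)
  qed
  have Dul_u: "Dul \<bullet> u = 0"
    using ortho unfolding Dul_def by (metis symmetric_matrix_dot[OF G_sym] inner_commute)
  have Dul_v: "Dul \<bullet> v = Du \<bullet> (G *v v)"
    unfolding Dul_def by (rule symmetric_matrix_dot[OF G_sym])
  have ul_u: "ul \<bullet> u = -1" using unit by (simp add: ul_def)
  have "(m' *\<^sub>R u + m *\<^sub>R Du) \<bullet> (G *v v)
       + (\<Sum>\<mu>\<in>UNIV. \<Sum>\<nu>\<in>UNIV. ul $ \<nu> * Dul $ \<mu> * (DS $ \<mu> $ \<nu> - m * (u $ \<mu> * v $ \<nu> - u $ \<nu> * v $ \<mu>)))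
     = m' * c"
  proof -
    have "(\<Sum>\<mu>\<in>UNIV. \<Sum>\<nu>\<in>UNIV. ul $ \<nu> * Dul $ \<mu> * (DS $ \<mu> $ \<nu> - m * (u $ \<mu> * v $ \<nu> - u $ \<nu> * v $ \<mu>)))
        = (\<Sum>\<mu>\<in>UNIV. \<Sum>\<nu>\<in>UNIV. ul $ \<nu> * Dul $ \<mu> * DS $ \<mu> $ \<nu>)
          - m * (\<Sum>\<mu>\<in>UNIV. \<Sum>\<nu>\<in>UNIV. ul $ \<nu> * Dul $ \<mu> * (u $ \<mu> * v $ \<nu> - u $ \<nu> * v $ \<mu>))"
      by (simp add: right_diff_distrib sum_subtractf sum_distrib_left mult.left_commute)
    with spin orbital Dul_u Dul_v ul_u show ?thesis by (simp add: c_def inner_add_left)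
  qed
  then show ?thesis using uv by (simp add: ul_def Dul_def c_def Dp orbital_p)
qed


theorem mainTheorem8:
  fixes g :: "real^'n \<Rightarrow> real^'n^'n" and U :: "(real^'n) set"
    and T :: "real set" and z v p u :: "real \<Rightarrow> real^'n"
    and S :: "real \<Rightarrow> real^'n^'n" and M :: "real \<Rightarrow> real" and s :: real
  assumes U_open: "open U"
    and g_lor: "\<And>x. x \<in> U \<Longrightarrow> lorentzian_matrix (g x)"
    and g_C1: "\<And>x i j. x \<in> U \<Longrightarrow> (\<lambda>y. g y $ i $ j) differentiable (at x)"
    and g_C2: "\<And>x i j k. x \<in> U \<Longrightarrow> (\<lambda>y. pd (\<lambda>w. g w $ i $ j) y k) differentiable (at x)"
    and T_open: "open T"
    and z_in: "\<And>t. t \<in> T \<Longrightarrow> z t \<in> U"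
    and z_deriv: "\<And>t. t \<in> T \<Longrightarrow> (z has_vector_derivative v t) (at t)"
    and v_cont: "continuous_on T v"
    and p_diff: "\<And>t. t \<in> T \<Longrightarrow> p differentiable (at t)"
    and S_diff: "\<And>t. t \<in> T \<Longrightarrow> S differentiable (at t)"
    and u_diff: "\<And>t. t \<in> T \<Longrightarrow> u differentiable (at t)"
    and M_diff: "\<And>t. t \<in> T \<Longrightarrow> M differentiable (at t)"
    and S_antisym: "\<And>t \<mu> \<nu>. t \<in> T \<Longrightarrow> S t $ \<mu> $ \<nu> = - S t $ \<nu> $ \<mu>"
    and u_unit: "\<And>t. t \<in> T \<Longrightarrow> (\<Sum>\<mu>\<in>UNIV. lower g (z t) (u t) \<mu> * u t $ \<mu>) = -1"
    and M_pos: "\<And>t. t \<in> T \<Longrightarrow> M t > 0"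
    and p_Mu: "\<And>t. t \<in> T \<Longrightarrow> p t = M t *\<^sub>R u t"
    and uS: "\<And>t \<nu>. t \<in> T \<Longrightarrow> (\<Sum>\<mu>\<in>UNIV. lower g (z t) (u t) \<mu> * S t $ \<mu> $ \<nu>) = 0"
    and uv: "\<And>t. t \<in> T \<Longrightarrow> (\<Sum>\<kappa>\<in>UNIV. u t $ \<kappa> * lower g (z t) (v t) \<kappa>) \<noteq> 0"
    and s_in: "s \<in> T"
  shows "deriv M s =
    inverse (\<Sum>\<kappa>\<in>UNIV. u s $ \<kappa> * lower g (z s) (v s) \<kappa>) *
      ((\<Sum>\<mu>\<in>UNIV. force g z v p S s \<mu> * lower g (z s) (v s) \<mu>)
       + (\<Sum>\<mu>\<in>UNIV. \<Sum>\<nu>\<in>UNIV. lower g (z s) (u s) \<nu>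
            * cov_covec g z v (\<lambda>t. lower g (z t) (u t)) s \<mu>
            * torque g z v p S s \<mu> \<nu>))"
proof -
  have g: "metric_field g U"
    using U_open g_lor g_C1 by (rule lorentzian_metric_field)
  have zU: "z s \<in> U" and z: "(z has_vector_derivative v s) (at s)"
    using z_in z_deriv s_in by auto
  note G = metric_field_at(1,2)[OF g zU] and u' = u_diff[OF s_in] and S' = S_diff[OF s_in]
  have S_anti: "transpose (S t) = - S t" if "t \<in> T" for t
    by (rule antisymmetric_matrixI) (rule S_antisym[OF that])
  have unit: "(g (z s) *v u s) \<bullet> u s = -1"
    using u_unit[OF s_in] by (simp only: lower_dot)
  have ortho: "(g (z s) *v u s) \<bullet> covd_vec g z v u s = 0"
    using g zU z u' T_open s_in by (rule constant_norm_orthogonal) (use u_unit in \<open>simp only: lower_dot\<close>)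
  have transport: "(g (z s) *v covd_vec g z v u s) v* S s + (g (z s) *v u s) v* covd_ten g z v S s = 0"
    using g zU z u' S' T_open s_in
    by (rule annihilation_transported) (use uS in \<open>simp add: vec_eq_iff lower_contract\<close>)
  have DS_anti: "transpose (covd_ten g z v S s) = - covd_ten g z v S s"
    using T_open s_in S_anti S' by (rule covd_ten_antisymmetric)
  have Dp: "covd_vec g z v p s = deriv M s *\<^sub>R u s + M s *\<^sub>R covd_vec g z v u s"
    using T_open s_in p_Mu
    by (rule covd_vec_scaleR) (use M_diff[OF s_in] u' DERIV_deriv_iff_real_differentiable in auto)
  have uv': "u s \<bullet> (g (z s) *v v s) \<noteq> 0"
    using uv[OF s_in] unfolding dot_lower .
  show ?thesis
    unfolding dot_lower force_along_velocity[of g z s, OF G] torque_contraction[of g U z s v, OF g zU z u']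
    by (rule mass_rate_identity[OF G(1) unit ortho transport S_anti[OF s_in] DS_anti uv' p_Mu[OF s_in] Dp])
qed

end
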